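(* Let $(Z, S(1), S(0), Y(1), Y(0), \mathbf{X})$ be random variables with $Z\in\{0,1\}$, $S(z)\in\{0,1\}$, $Y(z)$ real-valued, $\mathbf{X}$ a covariate vector, observed $S=S(Z)$, $Y=Y(Z)$, and assume Randomization: $Z \perp\!\!\!\perp \{S(1),S(0),Y(1),Y(0),\mathbf{X}\}$ (no monotonicity is assumed). Assume General Principal Ignorability, i.e. $Y(z)\perp\!\!\!\perp U\mid \mathbf{X}$ for $z=0,1$, and suppose $\xi = \Pr(U=\bar{s}s\mid\mathbf{X})/\Pr(U=s\bar{s}\mid\mathbf{X})$ is a fixed constant. Then for each stratum $u\in\{ss,s\bar{s},\bar{s}s,\bar{s}\bar{s}\}$, writing $u=(s(1),s(0))$, $$ACE_u = E\{w_{1,u}(\mathbf{X})Y\mid Z=1,S=s(1)\} - E\{w_{0,u}(\mathbf{X})Y\mid Z=0,S=s(0)\},$$ where for $z\in\{0,1\}$, letting $\mathcal{U}_z(u)=\{u' : u' \text{ has the same value of } S(z) \text{ as } u\}$ (the two strata that are mixed in the observed group $(Z=z,S=s(z))$), $$w_{z,u}(\mathbf{X}) = \frac{e_u(\mathbf{X})}{\sum_{u'\in\mathcal{U}_z(u)} e_{u'}(\mathbf{X})}\Big/\frac{\pi_u}{\sum_{u'\in\mathcal{U}_z(u)}\pi_{u'}}.$$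
   Context: The principal stratum is $U=(S(1),S(0))$, whose values $(1,1),(1,0),(0,1),(0,0)$ are labelled $ss, s\bar{s}, \bar{s}s, \bar{s}\bar{s}$. Principal scores: $e_u(\mathbf{X}) = \Pr(U=u\mid \mathbf{X})$; proportions $\pi_u=\Pr(U=u)$. Principal causal effects: $ACE_u = E\{Y(1)-Y(0)\mid U=u\}$. All expectations are assumed to exist and all conditioning events and denominators to be positive. *)

theory Defs
  imports "HOL-Probability.Probability"
begin

definition sigX :: "'a measure \<Rightarrow> 'b measure \<Rightarrow> ('a \<Rightarrow> 'b) \<Rightarrow> 'a measure" where
  "sigX M N X = vimage_algebra (space M) X N"

definition cprobX :: "'a measure \<Rightarrow> 'b measure \<Rightarrow> ('a \<Rightarrow> 'b) \<Rightarrow> ('a \<Rightarrow> 'c) \<Rightarrow> 'c \<Rightarrow> 'a \<Rightarrow> real" where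
  "cprobX M N X V v = real_cond_exp M (sigX M N X) (indicator {\<omega>\<in>space M. V \<omega> = v})"

definition cond_indep_var :: "'a measure \<Rightarrow> 'c measure \<Rightarrow> ('a \<Rightarrow> 'c) \<Rightarrow> 'd measure \<Rightarrow> ('a \<Rightarrow> 'd)
    \<Rightarrow> 'b measure \<Rightarrow> ('a \<Rightarrow> 'b) \<Rightarrow> bool" where
  "cond_indep_var M MA A MB B N X \<longleftrightarrow>
     (\<forall>SA\<in>sets MA. \<forall>SB\<in>sets MB. AE \<omega> in M.
        real_cond_exp M (sigX M N X)
          (\<lambda>t. indicator (A -` SA \<inter> space M) t * indicator (B -` SB \<inter> space M) t) \<omega>
        = real_cond_exp M (sigX M N X) (indicator (A -` SA \<inter> space M)) \<omega>
          * real_cond_exp M (sigX M N X) (indicator (B -` SB \<inter> space M)) \<omega>)"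

text \<open>Independence of two random variables of possibly different types
  (the library's indep_var requires equal codomain types): the generated sigma-algebras are independent.\<close>
definition indep_rv :: "'a measure \<Rightarrow> 'c measure \<Rightarrow> ('a \<Rightarrow> 'c) \<Rightarrow> 'd measure \<Rightarrow> ('a \<Rightarrow> 'd) \<Rightarrow> bool" where
  "indep_rv M MA A MB B \<longleftrightarrow>
     prob_space.indep_set M {A -` SA \<inter> space M | SA. SA \<in> sets MA} {B -` SB \<inter> space M | SB. SB \<in> sets MB}"

definition cond_expect_event :: "'a measure \<Rightarrow> ('a \<Rightarrow> real) \<Rightarrow> 'a set \<Rightarrow> real" where
  "cond_expect_event M f A = (\<integral>\<omega>. f \<omega> * indicator A \<omega> \<partial>M) / measure M A"

text \<open>Principal stratum U = (S(1), S(0)); True encodes the value 1.\<close>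
definition stratum :: "('a \<Rightarrow> bool) \<Rightarrow> ('a \<Rightarrow> bool) \<Rightarrow> 'a \<Rightarrow> bool \<times> bool" where
  "stratum S1 S0 \<omega> = (S1 \<omega>, S0 \<omega>)"

definition pscore :: "'a measure \<Rightarrow> 'b measure \<Rightarrow> ('a \<Rightarrow> 'b) \<Rightarrow> ('a \<Rightarrow> bool) \<Rightarrow> ('a \<Rightarrow> bool)
    \<Rightarrow> bool \<times> bool \<Rightarrow> 'a \<Rightarrow> real" where
  "pscore M N X S1 S0 u = cprobX M N X (stratum S1 S0) u"

definition pprop :: "'a measure \<Rightarrow> ('a \<Rightarrow> bool) \<Rightarrow> ('a \<Rightarrow> bool) \<Rightarrow> bool \<times> bool \<Rightarrow> real" where
  "pprop M S1 S0 u = measure M {\<omega>\<in>space M. stratum S1 S0 \<omega> = u}"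

text \<open>S(z) component of a stratum: z = True selects S(1) (first), z = False selects S(0).\<close>
definition scomp :: "bool \<Rightarrow> bool \<times> bool \<Rightarrow> bool" where
  "scomp z u = (if z then fst u else snd u)"

definition Ustr :: "bool \<Rightarrow> bool \<times> bool \<Rightarrow> (bool \<times> bool) set" where
  "Ustr z u = {u'. scomp z u' = scomp z u}"

definition weight :: "'a measure \<Rightarrow> 'b measure \<Rightarrow> ('a \<Rightarrow> 'b) \<Rightarrow> ('a \<Rightarrow> bool) \<Rightarrow> ('a \<Rightarrow> bool)
    \<Rightarrow> bool \<Rightarrow> bool \<times> bool \<Rightarrow> 'a \<Rightarrow> real" where
  "weight M N X S1 S0 z u \<omega> =
     (pscore M N X S1 S0 u \<omega> / (\<Sum>u'\<in>Ustr z u. pscore M N X S1 S0 u' \<omega>))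
     / (pprop M S1 S0 u / (\<Sum>u'\<in>Ustr z u. pprop M S1 S0 u'))"

definition ACE :: "'a measure \<Rightarrow> ('a \<Rightarrow> bool) \<Rightarrow> ('a \<Rightarrow> bool) \<Rightarrow> ('a \<Rightarrow> real) \<Rightarrow> ('a \<Rightarrow> real)
    \<Rightarrow> bool \<times> bool \<Rightarrow> real" where
  "ACE M S1 S0 Y1 Y0 u =
     cond_expect_event M (\<lambda>\<omega>. Y1 \<omega> - Y0 \<omega>) {\<omega>\<in>space M. stratum S1 S0 \<omega> = u}"

end

(* On the observed arm Z = z, S = s(z), randomization removes the conditioning on Z: the arm
   is the event U \<in> U_z(u), on which Y = Y(z), and its probability factorizes as
   P(Z = z) P(U \<in> U_z(u)).  Up to the constant (\<Sum> \<pi>) / \<pi>_u the weight is the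
   \<sigma>(X)-measurable ratio r = e_u(X) / \<Sum>_{U_z(u)} e(X).  Principal ignorability makes
   Y(z) and U conditionally independent given X, so for every Borel set A,
   E{r 1[Y(z) \<in> A] 1[U \<in> U_z(u)]} = P(Y(z) \<in> A, U = u); a signed-measure argument upgrades
   this from indicators of Y(z) to Y(z) itself.  Hence each arm's weighted mean is
   E{Y(z) 1[U = u]} / \<pi>_u = E{Y(z) | U = u}, and their difference is ACE_u. *)

theory Submission
  imports Defs
begin

lemma emeasure_distr_density_real:
  fixes Y G :: "'a \<Rightarrow> real"
  assumes [measurable]: "Y \<in> borel_measurable M" and "integrable M G" and "\<And>x. 0 \<le> G x"
    and [measurable]: "A \<in> sets borel"
  shows "emeasure (distr (density M G) borel Y) A = ennreal (\<integral>x. G x * indicator (Y -` A \<inter> space M) x \<partial>M)"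
proof -
  have [measurable]: "G \<in> borel_measurable M" using assms(2) by simp
  have "emeasure (distr (density M G) borel Y) A = emeasure (density M G) (Y -` A \<inter> space M)"
    by (subst emeasure_distr) auto
  also have "\<dots> = (\<integral>\<^sup>+ x. ennreal (G x * indicator (Y -` A \<inter> space M) x) \<partial>M)"
    by (subst emeasure_density) (auto intro!: nn_integral_cong split: split_indicator)
  also have "\<dots> = ennreal (\<integral>x. G x * indicator (Y -` A \<inter> space M) x \<partial>M)"
    using assms(2,3) by (intro nn_integral_eq_integral integrable_real_mult_indicator) auto
  finally show ?thesis .
qed

lemma integral_mult_eq_0_if_integral_indicator_mult_eq_0:
  fixes Y D :: "'a \<Rightarrow> real"
  assumes [measurable]: "Y \<in> borel_measurable M" and D: "integrable M D"
    and YD: "integrable M (\<lambda>x. Y x * D x)"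
    and vanish: "\<And>A. A \<in> sets borel \<Longrightarrow> (\<integral>x. D x * indicator (Y -` A \<inter> space M) x \<partial>M) = 0"
  shows "(\<integral>x. Y x * D x \<partial>M) = 0"
proof -
  define Dp where "Dp x = max (D x) 0" for x
  define Dn where "Dn x = max (- D x) 0" for x
  have [measurable]: "D \<in> borel_measurable M" using D by simp
  have Dp: "integrable M Dp" and Dn: "integrable M Dn"
    unfolding Dp_def Dn_def using D by auto
  have YDp: "integrable M (\<lambda>x. Y x * Dp x)" and YDn: "integrable M (\<lambda>x. Y x * Dn x)"
    by (auto intro!: Bochner_Integration.integrable_bound[OF YD] AE_I2
        simp: Dp_def Dn_def abs_mult max_def mult_left_mono)
  have D_split: "D x = Dp x - Dn x" for x by (simp add: Dp_def Dn_def max_def)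
  have Dp_nonneg: "0 \<le> Dp x" and Dn_nonneg: "0 \<le> Dn x" for x by (simp_all add: Dp_def Dn_def)
  \<comment> \<open>The hypothesis says that the image measures of the densities \<open>D\<^sup>+\<close> and \<open>D\<^sup>-\<close> under \<open>Y\<close> coincide.\<close>
  have image_eq: "distr (density M Dp) borel Y = distr (density M Dn) borel Y"
  proof (rule measure_eqI)
    fix A assume "A \<in> sets (distr (density M Dp) borel Y)"
    then have A[measurable]: "A \<in> sets borel" by simp
    let ?I = "indicator (Y -` A \<inter> space M) :: 'a \<Rightarrow> real"
    have "(\<integral>x. Dp x * ?I x \<partial>M) - (\<integral>x. Dn x * ?I x \<partial>M) = (\<integral>x. D x * ?I x \<partial>M)"
      using integrable_real_mult_indicator[of _ M Dp] integrable_real_mult_indicator[of _ M Dn] Dp Dn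
      by (simp add: D_split left_diff_distrib)
    then show "emeasure (distr (density M Dp) borel Y) A = emeasure (distr (density M Dn) borel Y) A"
      using vanish[OF A] by (simp add: emeasure_distr_density_real Dp Dn Dp_nonneg Dn_nonneg)
  qed simp
  have image_mean: "(\<integral>y. y \<partial>distr (density M G) borel Y) = (\<integral>x. Y x * G x \<partial>M)"
    if [measurable]: "integrable M G" and "\<And>x. 0 \<le> G x" for G :: "'a \<Rightarrow> real"
    by (simp add: integral_distr integral_density that mult.commute)
  have "(\<integral>x. Y x * Dp x \<partial>M) = (\<integral>x. Y x * Dn x \<partial>M)"
    using image_mean[OF Dp Dp_nonneg] image_mean[OF Dn Dn_nonneg] image_eq by simp
  then show ?thesis
    using YDp YDn by (simp add: D_split right_diff_distrib)
qed

lemma subalgebra_sigX: "X \<in> measurable M N \<Longrightarrow> subalgebra M (sigX M N X)"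
  unfolding subalgebra_def sigX_def
  by (auto simp: sets_vimage_algebra2 measurable_space measurable_sets)

lemma sum_indicator_level_sets:
  assumes "finite V"
  shows "(\<Sum>v\<in>V. indicator {\<omega>\<in>\<Omega>. f \<omega> = v} \<omega>) = (indicator {\<omega>\<in>\<Omega>. f \<omega> \<in> V} \<omega> :: real)"
proof -
  have "(\<Sum>v\<in>V. indicator {\<omega>\<in>\<Omega>. f \<omega> = v} \<omega> :: real)
      = (\<Sum>v\<in>V. if f \<omega> = v then indicator \<Omega> \<omega> else 0)"
    by (rule sum.cong) (auto split: split_indicator)
  also have "\<dots> = indicator {\<omega>\<in>\<Omega>. f \<omega> \<in> V} \<omega>"
    using assms by (simp add: sum.delta split: split_indicator)
  finally show ?thesis .
qed

lemma (in sigma_finite_subalgebra) integral_reweight_cond_indep: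
  fixes r i a b :: "'a \<Rightarrow> real"
  assumes [measurable]: "r \<in> borel_measurable F"
    and [measurable]: "i \<in> borel_measurable M" "a \<in> borel_measurable M" "b \<in> borel_measurable M"
    and int_b: "integrable M (\<lambda>x. r x * (i x * b x))" and int_a: "integrable M (\<lambda>x. i x * a x)"
    and indep_b: "AE x in M. real_cond_exp M F (\<lambda>t. i t * b t) x = real_cond_exp M F i x * real_cond_exp M F b x"
    and indep_a: "AE x in M. real_cond_exp M F (\<lambda>t. i t * a t) x = real_cond_exp M F i x * real_cond_exp M F a x"
    and ratio: "AE x in M. r x * real_cond_exp M F b x = real_cond_exp M F a x"
  shows "(\<integral>x. r x * (i x * b x) \<partial>M) = (\<integral>x. i x * a x \<partial>M)"
proof -
  have [measurable]: "r \<in> borel_measurable M" by (rule measurable_from_subalg[OF subalg]) simp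
  have "(\<integral>x. r x * (i x * b x) \<partial>M) = (\<integral>x. r x * real_cond_exp M F (\<lambda>t. i t * b t) x \<partial>M)"
    using int_b by (simp add: real_cond_exp_intg(2))
  also have "\<dots> = (\<integral>x. real_cond_exp M F (\<lambda>t. i t * a t) x \<partial>M)"
  proof (rule integral_cong_AE)
    show "AE x in M. r x * real_cond_exp M F (\<lambda>t. i t * b t) x = real_cond_exp M F (\<lambda>t. i t * a t) x"
      using indep_b indep_a ratio by eventually_elim (simp add: mult.left_commute)
  qed simp_all
  also have "\<dots> = (\<integral>x. i x * a x \<partial>M)"
    using int_a by (rule real_cond_exp_int(2))
  finally show ?thesis .
qed

lemma integral_indicator_mult_indep:
  fixes Z :: "'a \<Rightarrow> 'c" and T :: "'a \<Rightarrow> 'd" and f :: "'a \<Rightarrow> real"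
  assumes "prob_space M" and [measurable]: "Z \<in> measurable M (count_space UNIV)"
    and [measurable]: "T \<in> measurable M NT" and indep: "indep_rv M (count_space UNIV) Z NT T"
    and f_meas: "f \<in> borel_measurable (vimage_algebra (space M) T NT)" and f_int: "integrable M f"
  shows "(\<integral>\<omega>. indicator (Z -` {c} \<inter> space M) \<omega> * f \<omega> \<partial>M)
         = measure M (Z -` {c} \<inter> space M) * (\<integral>\<omega>. f \<omega> \<partial>M)"
proof -
  interpret prob_space M by fact
  define G where "G = vimage_algebra (space M) T NT"
  define E where "E = Z -` {c} \<inter> space M"
  have subG: "subalgebra M G" using subalgebra_sigX[of T M NT] by (simp add: G_def sigX_def)
  interpret finite_measure_subalgebra M G by unfold_locales (rule subG)
  have [measurable]: "E \<in> sets M" "f \<in> borel_measurable G" "f \<in> borel_measurable M"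
    using f_meas f_int by (simp_all add: E_def G_def)
  \<comment> \<open>Independence of \<open>Z\<close> and \<open>T\<close> makes \<open>P(Z = c | T)\<close> constant.\<close>
  have cond_prob: "AE x in M. real_cond_exp M G (indicator E) x = prob E"
  proof (rule real_cond_exp_charact)
    fix A assume "A \<in> sets G"
    then obtain S where "S \<in> sets NT" and A: "A = T -` S \<inter> space M"
      using assms(3) unfolding G_def by (auto simp: sets_vimage_algebra2 measurable_space)
    then have "prob (E \<inter> A) = prob E * prob A"
      using indep unfolding indep_rv_def E_def by (intro indep_setD) auto
    moreover have "A \<in> sets M" using A \<open>S \<in> sets NT\<close> assms(3) by auto
    ultimately show "(\<integral>x\<in>A. indicator E x \<partial>M) = (\<integral>x\<in>A. prob E \<partial>M)"
      by (simp add: set_lebesgue_integral_def indicator_inter_arith[symmetric] Int_commute mult.commute)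
  qed (auto intro: integrable_const_bound[where B=1] split: split_indicator)
  have "(\<integral>\<omega>. indicator E \<omega> * f \<omega> \<partial>M) = (\<integral>\<omega>. f \<omega> * real_cond_exp M G (indicator E) \<omega> \<partial>M)"
    using integrable_real_mult_indicator[OF \<open>E \<in> sets M\<close> f_int]
    by (simp add: real_cond_exp_intg(2) mult.commute)
  also have "\<dots> = (\<integral>\<omega>. f \<omega> * prob E \<partial>M)"
    by (rule integral_cong_AE) (use cond_prob in \<open>auto elim!: eventually_mono\<close>)
  finally show ?thesis by (simp add: E_def)
qed

locale principal_strata = prob_space M for M :: "'a measure" +
  fixes N :: "'b measure" and X :: "'a \<Rightarrow> 'b" and S1 S0 :: "'a \<Rightarrow> bool"
  assumes X_measurable[measurable]: "X \<in> measurable M N"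
    and S1_measurable[measurable]: "S1 \<in> measurable M (count_space UNIV)"
    and S0_measurable[measurable]: "S0 \<in> measurable M (count_space UNIV)"
begin

sublocale finite_measure_subalgebra M "sigX M N X"
  by unfold_locales (rule subalgebra_sigX[OF X_measurable])

abbreviation "stratum_event u \<equiv> {\<omega>\<in>space M. stratum S1 S0 \<omega> = u}"

abbreviation "mixed_event z u \<equiv> {\<omega>\<in>space M. stratum S1 S0 \<omega> \<in> Ustr z u}"

lemma stratum_event_sets[measurable]: "stratum_event u \<in> sets M"
  unfolding stratum_def by measurable

lemma mixed_event_sets[measurable]: "mixed_event z u \<in> sets M"
  unfolding stratum_def by measurable

lemma pscore_measurable[measurable]: "pscore M N X S1 S0 v \<in> borel_measurable (sigX M N X)"
  by (simp add: pscore_def cprobX_def)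

lemma pscore_eq_cond_exp: "pscore M N X S1 S0 v = real_cond_exp M (sigX M N X) (indicator (stratum_event v))"
  by (simp add: pscore_def cprobX_def)

lemma pscore_nonneg: "AE \<omega> in M. \<forall>v. 0 \<le> pscore M N X S1 S0 v \<omega>"
  unfolding AE_all_countable pscore_eq_cond_exp by (intro allI real_cond_exp_pos) auto

lemma sum_pscore_Ustr:
  "AE \<omega> in M. (\<Sum>v\<in>Ustr z u. pscore M N X S1 S0 v \<omega>)
     = real_cond_exp M (sigX M N X) (indicator (mixed_event z u)) \<omega>"
proof -
  have "(\<lambda>\<omega>. \<Sum>v\<in>Ustr z u. indicator (stratum_event v) \<omega> :: real) = indicator (mixed_event z u)"
    by (simp add: sum_indicator_level_sets)
  moreover have "AE \<omega> in M. real_cond_exp M (sigX M N X) (\<lambda>\<omega>. \<Sum>v\<in>Ustr z u. indicator (stratum_event v) \<omega>) \<omega>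
      = (\<Sum>v\<in>Ustr z u. real_cond_exp M (sigX M N X) (indicator (stratum_event v)) \<omega>)"
    by (rule real_cond_exp_sum) (auto intro: integrable_const_bound[where B=1] split: split_indicator)
  ultimately show ?thesis by (simp add: pscore_eq_cond_exp eq_commute)
qed

lemma sum_pprop_Ustr: "(\<Sum>v\<in>Ustr z u. pprop M S1 S0 v) = prob (mixed_event z u)"
proof -
  have "(\<Sum>v\<in>Ustr z u. pprop M S1 S0 v) = (\<Sum>v\<in>Ustr z u. \<integral>\<omega>. indicator (stratum_event v) \<omega> \<partial>M)"
    by (simp add: pprop_def)
  also have "\<dots> = (\<integral>\<omega>. (\<Sum>v\<in>Ustr z u. indicator (stratum_event v) \<omega>) \<partial>M)"
    by (rule Bochner_Integration.integral_sum[symmetric])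
      (auto intro: integrable_const_bound[where B=1] split: split_indicator)
  also have "\<dots> = prob (mixed_event z u)"
    by (simp add: sum_indicator_level_sets)
  finally show ?thesis .
qed

lemma cond_indep_stratum_setD:
  assumes "cond_indep_var M borel Y (count_space UNIV) (stratum S1 S0) N X" and "A \<in> sets borel"
  shows "AE \<omega> in M. real_cond_exp M (sigX M N X)
             (\<lambda>t. indicator (Y -` A \<inter> space M) t * indicator {t\<in>space M. stratum S1 S0 t \<in> V} t) \<omega>
           = real_cond_exp M (sigX M N X) (indicator (Y -` A \<inter> space M)) \<omega>
             * real_cond_exp M (sigX M N X) (indicator {t\<in>space M. stratum S1 S0 t \<in> V}) \<omega>"
proof -
  have "{t\<in>space M. stratum S1 S0 t \<in> V} = stratum S1 S0 -` V \<inter> space M" by auto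
  then show ?thesis using assms unfolding cond_indep_var_def by simp
qed

definition score_ratio :: "bool \<Rightarrow> bool \<times> bool \<Rightarrow> 'a \<Rightarrow> real" where
  "score_ratio z u \<omega> = pscore M N X S1 S0 u \<omega> / (\<Sum>v\<in>Ustr z u. pscore M N X S1 S0 v \<omega>)"

lemma score_ratio_measurable[measurable]:
  shows "score_ratio z u \<in> borel_measurable (sigX M N X)" and "score_ratio z u \<in> borel_measurable M"
proof -
  show "score_ratio z u \<in> borel_measurable (sigX M N X)" unfolding score_ratio_def by measurable
  then show "score_ratio z u \<in> borel_measurable M" by (rule measurable_from_subalg[OF subalg])
qed

lemma score_ratio_bounds:
  assumes pos: "AE \<omega> in M. (\<Sum>v\<in>Ustr z u. pscore M N X S1 S0 v \<omega>) > 0"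
  shows "AE \<omega> in M. 0 \<le> score_ratio z u \<omega> \<and> score_ratio z u \<omega> \<le> 1"
  using pscore_nonneg pos
proof eventually_elim
  case (elim \<omega>)
  have "pscore M N X S1 S0 u \<omega> \<le> (\<Sum>v\<in>Ustr z u. pscore M N X S1 S0 v \<omega>)"
    using elim(1) by (intro member_le_sum) (auto simp: Ustr_def)
  moreover have "0 \<le> pscore M N X S1 S0 u \<omega>" using elim(1) by blast
  ultimately show ?case using elim(2) by (simp add: score_ratio_def)
qed

lemma score_ratio_mult_cond_prob:
  assumes "AE \<omega> in M. (\<Sum>v\<in>Ustr z u. pscore M N X S1 S0 v \<omega>) > 0"
  shows "AE \<omega> in M. score_ratio z u \<omega> * real_cond_exp M (sigX M N X) (indicator (mixed_event z u)) \<omega>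
      = real_cond_exp M (sigX M N X) (indicator (stratum_event u)) \<omega>"
  using sum_pscore_Ustr[of z u] assms
  by eventually_elim (simp add: score_ratio_def pscore_eq_cond_exp)

lemma integral_score_ratio_contrast_indicator:
  fixes Y :: "'a \<Rightarrow> real"
  assumes ignorable: "cond_indep_var M borel Y (count_space UNIV) (stratum S1 S0) N X"
    and pos: "AE \<omega> in M. (\<Sum>v\<in>Ustr z u. pscore M N X S1 S0 v \<omega>) > 0"
    and [measurable]: "Y \<in> borel_measurable M" "A \<in> sets borel"
  shows "(\<integral>\<omega>. (score_ratio z u \<omega> * indicator (mixed_event z u) \<omega> - indicator (stratum_event u) \<omega>)
            * indicator (Y -` A \<inter> space M) \<omega> \<partial>M) = 0"
proof -
  let ?I = "indicator (Y -` A \<inter> space M) :: 'a \<Rightarrow> real"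
  have int_b: "integrable M (\<lambda>\<omega>. score_ratio z u \<omega> * (?I \<omega> * indicator (mixed_event z u) \<omega>))"
  proof (rule integrable_const_bound[where B=1])
    show "AE \<omega> in M. norm (score_ratio z u \<omega> * (?I \<omega> * indicator (mixed_event z u) \<omega>)) \<le> 1"
      using score_ratio_bounds[OF pos] by eventually_elim (auto split: split_indicator)
  qed simp
  have int_a: "integrable M (\<lambda>\<omega>. ?I \<omega> * indicator (stratum_event u) \<omega>)"
    by (rule integrable_const_bound[where B=1]) (auto split: split_indicator)
  have "(\<integral>\<omega>. score_ratio z u \<omega> * (?I \<omega> * indicator (mixed_event z u) \<omega>) \<partial>M)
      = (\<integral>\<omega>. ?I \<omega> * indicator (stratum_event u) \<omega> \<partial>M)"
    using cond_indep_stratum_setD[OF ignorable, of A "Ustr z u"] cond_indep_stratum_setD[OF ignorable, of A "{u}"]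
    by (intro integral_reweight_cond_indep int_b int_a score_ratio_mult_cond_prob[OF pos]) simp_all
  moreover have "(\<integral>\<omega>. (score_ratio z u \<omega> * indicator (mixed_event z u) \<omega> - indicator (stratum_event u) \<omega>) * ?I \<omega> \<partial>M)
      = (\<integral>\<omega>. score_ratio z u \<omega> * (?I \<omega> * indicator (mixed_event z u) \<omega>) - ?I \<omega> * indicator (stratum_event u) \<omega> \<partial>M)"
    by (rule Bochner_Integration.integral_cong) (simp_all add: algebra_simps)
  ultimately show ?thesis
    using int_a int_b by simp
qed

lemma integral_score_ratio_mult_mixed_event:
  fixes Y :: "'a \<Rightarrow> real"
  assumes [measurable]: "Y \<in> borel_measurable M" and Y_int: "integrable M Y"
    and ignorable: "cond_indep_var M borel Y (count_space UNIV) (stratum S1 S0) N X"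
    and pos: "AE \<omega> in M. (\<Sum>v\<in>Ustr z u. pscore M N X S1 S0 v \<omega>) > 0"
  shows "(\<integral>\<omega>. score_ratio z u \<omega> * Y \<omega> * indicator (mixed_event z u) \<omega> \<partial>M)
       = (\<integral>\<omega>. Y \<omega> * indicator (stratum_event u) \<omega> \<partial>M)"
proof -
  define D where "D \<omega> = score_ratio z u \<omega> * indicator (mixed_event z u) \<omega> - indicator (stratum_event u) \<omega>" for \<omega>
  note bounds = score_ratio_bounds[OF pos]
  have rY_int: "integrable M (\<lambda>\<omega>. score_ratio z u \<omega> * Y \<omega> * indicator (mixed_event z u) \<omega>)"
  proof (rule Bochner_Integration.integrable_bound[OF Y_int])
    show "AE \<omega> in M. norm (score_ratio z u \<omega> * Y \<omega> * indicator (mixed_event z u) \<omega>) \<le> norm (Y \<omega>)"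
      using bounds by eventually_elim (auto simp: abs_mult intro!: mult_left_le_one_le split: split_indicator)
  qed simp
  have YA_int: "integrable M (\<lambda>\<omega>. Y \<omega> * indicator (stratum_event u) \<omega>)"
    using Y_int by (rule integrable_real_mult_indicator[rotated]) simp
  have "(\<integral>\<omega>. Y \<omega> * D \<omega> \<partial>M) = 0"
  proof (rule integral_mult_eq_0_if_integral_indicator_mult_eq_0)
    show "integrable M D"
    proof (rule integrable_const_bound[where B=1])
      show "AE \<omega> in M. norm (D \<omega>) \<le> 1"
        using bounds by eventually_elim (auto simp: D_def split: split_indicator)
    qed (unfold D_def, measurable)
    show "integrable M (\<lambda>\<omega>. Y \<omega> * D \<omega>)"
      using rY_int YA_int by (simp add: D_def algebra_simps)
    show "(\<integral>\<omega>. D \<omega> * indicator (Y -` A \<inter> space M) \<omega> \<partial>M) = 0" if "A \<in> sets borel" for A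
      unfolding D_def by (rule integral_score_ratio_contrast_indicator[OF ignorable pos assms(1) that])
  qed simp
  moreover have "(\<integral>\<omega>. Y \<omega> * D \<omega> \<partial>M)
      = (\<integral>\<omega>. score_ratio z u \<omega> * Y \<omega> * indicator (mixed_event z u) \<omega> \<partial>M)
        - (\<integral>\<omega>. Y \<omega> * indicator (stratum_event u) \<omega> \<partial>M)"
    using rY_int YA_int by (simp add: D_def algebra_simps)
  ultimately show ?thesis by simp
qed

lemma weight_eq_score_ratio:
  "weight M N X S1 S0 z u \<omega> = score_ratio z u \<omega> * (prob (mixed_event z u) / pprop M S1 S0 u)"
  by (simp add: weight_def score_ratio_def sum_pprop_Ustr)

lemma ACE_eq_stratum_integrals:
  assumes "integrable M Y1" and "integrable M Y0"
  shows "ACE M S1 S0 Y1 Y0 u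
       = (\<integral>\<omega>. Y1 \<omega> * indicator (stratum_event u) \<omega> \<partial>M) / pprop M S1 S0 u
       - (\<integral>\<omega>. Y0 \<omega> * indicator (stratum_event u) \<omega> \<partial>M) / pprop M S1 S0 u"
  using integrable_real_mult_indicator[OF stratum_event_sets assms(1), of u]
    integrable_real_mult_indicator[OF stratum_event_sets assms(2), of u]
  by (simp add: ACE_def cond_expect_event_def pprop_def left_diff_distrib diff_divide_distrib)

abbreviation "potential_outcome_algebra Y1 Y0 \<equiv> vimage_algebra (space M)
  (\<lambda>\<omega>. (S1 \<omega>, S0 \<omega>, Y1 \<omega>, Y0 \<omega>, X \<omega>))
  (count_space UNIV \<Otimes>\<^sub>M count_space UNIV \<Otimes>\<^sub>M borel \<Otimes>\<^sub>M borel \<Otimes>\<^sub>M N)"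

lemma potential_outcome_algebra_measurable:
  fixes Y1 Y0 :: "'a \<Rightarrow> real"
  assumes [measurable]: "Y1 \<in> borel_measurable M" "Y0 \<in> borel_measurable M"
  shows "Y1 \<in> borel_measurable (potential_outcome_algebra Y1 Y0)"
    and "Y0 \<in> borel_measurable (potential_outcome_algebra Y1 Y0)"
    and "mixed_event z u \<in> sets (potential_outcome_algebra Y1 Y0)"
    and "weight M N X S1 S0 z u \<in> borel_measurable (potential_outcome_algebra Y1 Y0)"
proof -
  define T where "T = (\<lambda>\<omega>. (S1 \<omega>, S0 \<omega>, Y1 \<omega>, Y0 \<omega>, X \<omega>))"
  define G where "G = potential_outcome_algebra Y1 Y0"
  have space_G: "space G = space M" by (simp add: G_def)
  have T_meas: "T \<in> measurable M (count_space UNIV \<Otimes>\<^sub>M count_space UNIV \<Otimes>\<^sub>M borel \<Otimes>\<^sub>M borel \<Otimes>\<^sub>M N)"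
    unfolding T_def by measurable
  have [measurable]: "T \<in> measurable G (count_space UNIV \<Otimes>\<^sub>M count_space UNIV \<Otimes>\<^sub>M borel \<Otimes>\<^sub>M borel \<Otimes>\<^sub>M N)"
    unfolding G_def T_def[symmetric]
    by (rule measurable_vimage_algebra1) (use measurable_space[OF T_meas] in auto)
  have "(\<lambda>\<omega>. fst (T \<omega>)) \<in> measurable G (count_space UNIV)"
    "(\<lambda>\<omega>. fst (snd (T \<omega>))) \<in> measurable G (count_space UNIV)"
    "(\<lambda>\<omega>. fst (snd (snd (T \<omega>)))) \<in> borel_measurable G"
    "(\<lambda>\<omega>. fst (snd (snd (snd (T \<omega>))))) \<in> borel_measurable G"
    "(\<lambda>\<omega>. snd (snd (snd (snd (T \<omega>))))) \<in> measurable G N"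
    by measurable
  then have [measurable]: "S1 \<in> measurable G (count_space UNIV)" "S0 \<in> measurable G (count_space UNIV)"
      "Y1 \<in> borel_measurable G" "Y0 \<in> borel_measurable G" "X \<in> measurable G N"
    by (simp_all add: T_def)
  then show "Y1 \<in> borel_measurable (potential_outcome_algebra Y1 Y0)"
    and "Y0 \<in> borel_measurable (potential_outcome_algebra Y1 Y0)"
    by (simp_all add: G_def)
  have "{\<omega>\<in>space G. (S1 \<omega>, S0 \<omega>) \<in> Ustr z u} \<in> sets G" by measurable
  then show "mixed_event z u \<in> sets (potential_outcome_algebra Y1 Y0)"
    by (simp add: G_def[symmetric] stratum_def space_G)
  have [measurable]: "pscore M N X S1 S0 v \<in> borel_measurable G" for v
  proof (rule measurable_from_subalg)
    show "subalgebra G (sigX M N X)"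
      using subalgebra_sigX[of X G N] \<open>X \<in> measurable G N\<close> by (simp add: sigX_def space_G)
  qed simp
  show "weight M N X S1 S0 z u \<in> borel_measurable (potential_outcome_algebra Y1 Y0)"
    unfolding weight_def G_def[symmetric] by measurable
qed

lemma cond_expect_weighted_arm:
  fixes Z :: "'a \<Rightarrow> bool" and Y1 Y0 Y Yz :: "'a \<Rightarrow> real" and S :: "'a \<Rightarrow> bool"
  assumes S: "S = (\<lambda>\<omega>. if Z \<omega> then S1 \<omega> else S0 \<omega>)"
    and Y: "Y = (\<lambda>\<omega>. if Z \<omega> then Y1 \<omega> else Y0 \<omega>)"
    and Yz: "Yz = (if z then Y1 else Y0)"
    and [measurable]: "Z \<in> measurable M (count_space UNIV)"
      "Y1 \<in> borel_measurable M" "Y0 \<in> borel_measurable M"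
    and randomized: "indep_rv M (count_space UNIV) Z
           (count_space UNIV \<Otimes>\<^sub>M count_space UNIV \<Otimes>\<^sub>M borel \<Otimes>\<^sub>M borel \<Otimes>\<^sub>M N)
           (\<lambda>\<omega>. (S1 \<omega>, S0 \<omega>, Y1 \<omega>, Y0 \<omega>, X \<omega>))"
    and ignorable: "cond_indep_var M borel Yz (count_space UNIV) (stratum S1 S0) N X"
    and Yz_int: "integrable M Yz"
    and weighted_int: "integrable M (\<lambda>\<omega>. weight M N X S1 S0 z u \<omega> * Yz \<omega>)"
    and arm_pos: "measure M {\<omega>\<in>space M. Z \<omega> = z \<and> S \<omega> = scomp z u} > 0"
    and scores_pos: "AE \<omega> in M. (\<Sum>v\<in>Ustr z u. pscore M N X S1 S0 v \<omega>) > 0"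
  shows "cond_expect_event M (\<lambda>\<omega>. weight M N X S1 S0 z u \<omega> * Y \<omega>) {\<omega>\<in>space M. Z \<omega> = z \<and> S \<omega> = scomp z u}
       = (\<integral>\<omega>. Yz \<omega> * indicator (stratum_event u) \<omega> \<partial>M) / pprop M S1 S0 u"
proof -
  define G where "G = potential_outcome_algebra Y1 Y0"
  define B where "B = mixed_event z u"
  define Zz where "Zz = Z -` {z} \<inter> space M"
  define E where "E = {\<omega>\<in>space M. Z \<omega> = z \<and> S \<omega> = scomp z u}"
  define f where "f \<omega> = weight M N X S1 S0 z u \<omega> * Yz \<omega> * indicator B \<omega>" for \<omega>
  note G_measurable[measurable] = potential_outcome_algebra_measurable[of Y1 Y0, folded G_def]
  have [measurable]: "Yz \<in> borel_measurable G" "Yz \<in> borel_measurable M" by (simp_all add: Yz)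
  have [measurable]: "B \<in> sets G" by (simp add: B_def)
  have [measurable]: "B \<in> sets M" by (simp add: B_def)
  have f_int: "integrable M f"
    unfolding f_def using weighted_int by (rule integrable_real_mult_indicator[rotated]) (simp add: B_def)
  have f_meas: "f \<in> borel_measurable G" unfolding f_def by measurable
  have indep_arm: "(\<integral>\<omega>. indicator Zz \<omega> * g \<omega> \<partial>M) = prob Zz * (\<integral>\<omega>. g \<omega> \<partial>M)"
    if "g \<in> borel_measurable G" and "integrable M g" for g
    unfolding Zz_def using randomized that
    by (intro integral_indicator_mult_indep[OF prob_space_axioms]) (simp_all add: G_def)
  have E_indicator: "indicator E \<omega> = indicator Zz \<omega> * (indicator B \<omega> :: real)" for \<omega>
    by (cases z) (auto simp: E_def Zz_def B_def S stratum_def scomp_def Ustr_def split: split_indicator)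
  have E_prob: "prob E = prob Zz * prob B"
  proof -
    have "prob E = (\<integral>\<omega>. indicator Zz \<omega> * indicator B \<omega> \<partial>M)"
      by (simp add: E_indicator[symmetric] E_def Int_absorb2 subsetI)
    also have "\<dots> = prob Zz * prob B"
      by (subst indep_arm) (auto intro: integrable_const_bound[where B=1] split: split_indicator)
    finally show ?thesis .
  qed
  have numerator: "(\<integral>\<omega>. weight M N X S1 S0 z u \<omega> * Y \<omega> * indicator E \<omega> \<partial>M) = prob Zz * (\<integral>\<omega>. f \<omega> \<partial>M)"
  proof -
    have "(\<integral>\<omega>. weight M N X S1 S0 z u \<omega> * Y \<omega> * indicator E \<omega> \<partial>M) = (\<integral>\<omega>. indicator Zz \<omega> * f \<omega> \<partial>M)"
      by (rule Bochner_Integration.integral_cong)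
        (auto simp: E_indicator f_def Y Yz Zz_def split: split_indicator)
    then show ?thesis using indep_arm[OF f_meas f_int] by simp
  qed
  have "(\<integral>\<omega>. f \<omega> \<partial>M) = prob B / pprop M S1 S0 u
      * (\<integral>\<omega>. score_ratio z u \<omega> * Yz \<omega> * indicator (mixed_event z u) \<omega> \<partial>M)"
    unfolding integral_mult_right_zero[symmetric]
    by (rule Bochner_Integration.integral_cong) (simp_all add: f_def weight_eq_score_ratio B_def mult_ac)
  also have "\<dots> = prob B / pprop M S1 S0 u * (\<integral>\<omega>. Yz \<omega> * indicator (stratum_event u) \<omega> \<partial>M)"
    using integral_score_ratio_mult_mixed_event[OF _ Yz_int ignorable scores_pos] by simp
  finally have "(\<integral>\<omega>. f \<omega> \<partial>M) = \<dots>" .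
  moreover have "prob Zz \<noteq> 0" "prob B \<noteq> 0" using arm_pos E_prob by (auto simp: E_def)
  ultimately show ?thesis
    using numerator E_prob by (simp add: cond_expect_event_def E_def[symmetric])
qed

end

theorem proposition6:
  fixes M :: "'a measure" and N :: "'b measure"
    and Z S1 S0 :: "'a \<Rightarrow> bool" and Y1 Y0 :: "'a \<Rightarrow> real" and X :: "'a \<Rightarrow> 'b"
    and u :: "bool \<times> bool"
  defines "S \<equiv> (\<lambda>\<omega>. if Z \<omega> then S1 \<omega> else S0 \<omega>)"
    and "Y \<equiv> (\<lambda>\<omega>. if Z \<omega> then Y1 \<omega> else Y0 \<omega>)"
  assumes "prob_space M"
    and "Z \<in> measurable M (count_space UNIV)"
    and "S1 \<in> measurable M (count_space UNIV)"
    and "S0 \<in> measurable M (count_space UNIV)"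
    and "Y1 \<in> borel_measurable M" and "Y0 \<in> borel_measurable M"
    and "X \<in> measurable M N"
    \<comment> \<open>Randomization\<close>
    and "indep_rv M (count_space UNIV) Z
           (count_space UNIV \<Otimes>\<^sub>M count_space UNIV \<Otimes>\<^sub>M borel \<Otimes>\<^sub>M borel \<Otimes>\<^sub>M N)
           (\<lambda>\<omega>. (S1 \<omega>, S0 \<omega>, Y1 \<omega>, Y0 \<omega>, X \<omega>))"
    \<comment> \<open>General principal ignorability\<close>
    and "cond_indep_var M borel Y1 (count_space UNIV) (stratum S1 S0) N X"
    and "cond_indep_var M borel Y0 (count_space UNIV) (stratum S1 S0) N X"
    \<comment> \<open>xi = Pr(U = s-bar s | X) / Pr(U = s s-bar | X) is a fixed constant\<close>
    and "AE \<omega> in M. pscore M N X S1 S0 (True, False) \<omega> > 0"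
    and "\<exists>\<xi>::real. AE \<omega> in M.
           pscore M N X S1 S0 (False, True) \<omega> / pscore M N X S1 S0 (True, False) \<omega> = \<xi>"
    \<comment> \<open>existence of expectations\<close>
    and "integrable M Y1" and "integrable M Y0"
    and "integrable M (\<lambda>\<omega>. weight M N X S1 S0 True u \<omega> * Y1 \<omega>)"
    and "integrable M (\<lambda>\<omega>. weight M N X S1 S0 False u \<omega> * Y0 \<omega>)"
    \<comment> \<open>positive conditioning events and denominators\<close>
    and "pprop M S1 S0 u > 0"
    and "measure M {\<omega>\<in>space M. Z \<omega> \<and> S \<omega> = fst u} > 0"
    and "measure M {\<omega>\<in>space M. \<not> Z \<omega> \<and> S \<omega> = snd u} > 0"
    and "AE \<omega> in M. (\<Sum>u'\<in>Ustr True u. pscore M N X S1 S0 u' \<omega>) > 0"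
    and "AE \<omega> in M. (\<Sum>u'\<in>Ustr False u. pscore M N X S1 S0 u' \<omega>) > 0"
  shows "ACE M S1 S0 Y1 Y0 u =
           cond_expect_event M (\<lambda>\<omega>. weight M N X S1 S0 True u \<omega> * Y \<omega>)
             {\<omega>\<in>space M. Z \<omega> \<and> S \<omega> = fst u}
         - cond_expect_event M (\<lambda>\<omega>. weight M N X S1 S0 False u \<omega> * Y \<omega>)
             {\<omega>\<in>space M. \<not> Z \<omega> \<and> S \<omega> = snd u}"
proof -
  interpret principal_strata M N X S1 S0
    using assms(3,5,6,9) by (intro principal_strata.intro principal_strata_axioms.intro)
  have treated: "cond_expect_event M (\<lambda>\<omega>. weight M N X S1 S0 True u \<omega> * Y \<omega>)
      {\<omega>\<in>space M. Z \<omega> = True \<and> S \<omega> = scomp True u}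
    = (\<integral>\<omega>. Y1 \<omega> * indicator (stratum_event u) \<omega> \<partial>M) / pprop M S1 S0 u"
    by (rule cond_expect_weighted_arm[OF S_def[THEN meta_eq_to_obj_eq] Y_def[THEN meta_eq_to_obj_eq]])
      (use assms in \<open>simp_all add: scomp_def\<close>)
  have control: "cond_expect_event M (\<lambda>\<omega>. weight M N X S1 S0 False u \<omega> * Y \<omega>)
      {\<omega>\<in>space M. Z \<omega> = False \<and> S \<omega> = scomp False u}
    = (\<integral>\<omega>. Y0 \<omega> * indicator (stratum_event u) \<omega> \<partial>M) / pprop M S1 S0 u"
    by (rule cond_expect_weighted_arm[OF S_def[THEN meta_eq_to_obj_eq] Y_def[THEN meta_eq_to_obj_eq]])
      (use assms in \<open>simp_all add: scomp_def\<close>)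
  show ?thesis
    using ACE_eq_stratum_integrals[OF assms(15,16)] treated control by (simp add: scomp_def)
qed

end
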